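(* Let $2\le k<n$, $w=n-k$, and suppose there is an $(n,w,n-1)_q$ code of size $\frac{n(n-1)}{k(k-1)}$. Let $$R=\frac{(n-1)(n-k)}{k(k-1)},\qquad \widetilde P=\frac{(n-1)\big((n-k^2)(n-1)+k(k-1)^2\big)}{2k^2(k-1)^2},$$ $a=\lfloor R/(q-1)\rfloor$ and $b=R-a(q-1)$. Then $(q-1)\binom{a}{2}+ba\le\lfloor\widetilde P\rfloor$, and in particular $q-1\ge R-\lfloor\widetilde P\rfloor$.
   Context: $\mathbb{Z}_q=\{0,\dots,q-1\}$ (an alphabet); $\mathrm{wt}$ = number of nonzero coordinates; $d$ = Hamming distance; $J_q(n,w)$ = weight-$w$ words of $\mathbb{Z}_q^n$. An $(n,w,d)_q$ code of size $M$ is a subset $C\subseteq J_q(n,w)$ with $|C|=M$ and pairwise distances at least $d$. *)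

theory Defs
  imports Complex_Main
begin

definition wt :: "nat list \<Rightarrow> nat" where
  "wt x = card {i. i < length x \<and> x ! i \<noteq> 0}"

definition hdist :: "nat list \<Rightarrow> nat list \<Rightarrow> nat" where
  "hdist x y = card {i. i < length x \<and> x ! i \<noteq> y ! i}"

definition J :: "nat \<Rightarrow> nat \<Rightarrow> nat \<Rightarrow> nat list set" where
  "J q n w = {x. length x = n \<and> set x \<subseteq> {0..<q} \<and> wt x = w}"

definition is_code :: "nat \<Rightarrow> nat \<Rightarrow> nat \<Rightarrow> nat \<Rightarrow> nat \<Rightarrow> nat list set \<Rightarrow> bool" where
  "is_code q n w d M C \<longleftrightarrow> C \<subseteq> J q n w \<and> card C = M \<and>
     (\<forall>x\<in>C. \<forall>y\<in>C. x \<noteq> y \<longrightarrow> hdist x y \<ge> d)"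

end

theory Submission
  imports Defs
begin

(*
  Every codeword has exactly k zeros, and two codewords agree in at most one coordinate.
  Hence the codewords with a zero in a fixed coordinate i have pairwise disjoint sets of
  further zeros, so there are at most r = (n - 1)/(k - 1) of them; as the code contains
  M k = n r zeros altogether, every coordinate carries exactly r zeros.

  Counting pairs of codewords agreeing in a coordinate gives
  sum_i sum_s binom(c_i(s), 2) <= binom(M, 2), where c_i(s) is the number of codewords
  with symbol s in coordinate i. Removing the zero symbols leaves at most n * Pt pairs,
  so some coordinate has at most Pt agreeing pairs among its nonzero symbols, whose
  counts m_1, ..., m_(q-1) sum to M - r = R. By convexity of binom(x, 2) on the integers,
  sum_s binom(m_s, 2) is at least (q - 1) binom(a, 2) + b a (tangent at a) and at least
  R - (q - 1) (tangent at 1), and it is an integer.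
*)

lemma sum_card_filter_swap:
  assumes "finite A" "finite B"
  shows "(\<Sum>a\<in>A. card {b\<in>B. P a b}) = (\<Sum>b\<in>B. card {a\<in>A. P a b})"
proof -
  have card_filter: "card {x\<in>X. Q x} = (\<Sum>x\<in>X. if Q x then 1 else 0)"
    if "finite X" for X and Q :: "'z \<Rightarrow> bool"
    using that unfolding card_eq_sum by (rule sum.inter_filter)
  show ?thesis
    using assms by (simp add: card_filter sum.swap[of _ A B])
qed

lemma sum_fibre_pairs:
  assumes "finite C" "finite S" "f ` C \<subseteq> S"
  shows "(\<Sum>s\<in>S. card {x\<in>C. f x = s} * (card {x\<in>C. f x = s} - 1))
       = (\<Sum>x\<in>C. card {y\<in>C. y \<noteq> x \<and> f y = f x})"
proof -
  have "card {y\<in>C. y \<noteq> x \<and> f y = f x} = card {x\<in>C. f x = s} - 1"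
    if "x \<in> C" "f x = s" for x s
  proof -
    have "{y\<in>C. y \<noteq> x \<and> f y = f x} = {x\<in>C. f x = s} - {x}" using that by auto
    then show ?thesis using that assms(1) by simp
  qed
  then have "(\<Sum>x | x \<in> C \<and> f x = s. card {y\<in>C. y \<noteq> x \<and> f y = f x})
           = card {x\<in>C. f x = s} * (card {x\<in>C. f x = s} - 1)" for s
    by simp
  then show ?thesis
    using sum.group[OF assms, of "\<lambda>x. card {y\<in>C. y \<noteq> x \<and> f y = f x}"] by simp
qed

lemma two_mult_choose_two: "2 * (c choose 2) = c * (c - 1)"
  by (cases c) (simp_all add: choose_two)

lemma ex_le_average:
  fixes f :: "'i \<Rightarrow> 'a::linordered_semidom"
  assumes "finite A" "A \<noteq> {}" "sum f A \<le> of_nat (card A) * c"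
  shows "\<exists>i\<in>A. f i \<le> c"
proof (rule ccontr)
  assume "\<not> ?thesis"
  then have "(\<Sum>i\<in>A. c) < sum f A"
    using assms(1,2) by (intro sum_strict_mono) auto
  with assms(3) show False by simp
qed

lemma gchoose_two_tangent:
  fixes a c :: int
  shows "(of_int a gchoose 2) + of_int a * (of_int c - of_int a) \<le> (of_int c gchoose 2 :: real)"
proof -
  have "0 \<le> (of_int (c - a) :: real) * (of_int (c - a) - 1)"
    by (cases "c - a \<ge> 1") (auto intro: mult_nonneg_nonneg mult_nonpos_nonpos)
  moreover have "(of_int c gchoose 2 :: real) - ((of_int a gchoose 2) + of_int a * (of_int c - of_int a))
      = of_int (c - a) * (of_int (c - a) - 1) / 2"
    by (simp add: gbinomial_prod_rev numeral_2_eq_2 field_simps)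
  ultimately show ?thesis by linarith
qed

lemma sum_gchoose_two_ge:
  fixes m :: "'s \<Rightarrow> int" and a :: int
  shows "of_nat (card S) * (of_int a gchoose 2) + ((\<Sum>s\<in>S. of_int (m s)) - of_nat (card S) * of_int a) * of_int a
         \<le> (\<Sum>s\<in>S. of_int (m s) gchoose 2 :: real)"
proof (cases "finite S")
  case True
  have "of_nat (card S) * (of_int a gchoose 2) + ((\<Sum>s\<in>S. of_int (m s)) - of_nat (card S) * of_int a) * of_int a
      = (\<Sum>s\<in>S. (of_int a gchoose 2) + of_int a * (of_int (m s) - of_int a) :: real)"
    using True by (simp add: sum.distrib sum_subtractf sum_distrib_left algebra_simps)
  also have "\<dots> \<le> (\<Sum>s\<in>S. of_int (m s) gchoose 2)"
    by (intro sum_mono gchoose_two_tangent)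
  finally show ?thesis .
qed simp

text \<open>This is where Pt comes from: with M k (k - 1) = n (n - 1) and r (k - 1) = n - 1,
  n Pt is the number of agreeing pairs not accounted for by the zero symbols.\<close>

lemma gchoose_two_excess_eq:
  fixes n k M r :: real
  assumes "k \<noteq> 0" "k \<noteq> 1" "M * (k * (k - 1)) = n * (n - 1)" "r * (k - 1) = n - 1"
  shows "(M gchoose 2) - n * (r gchoose 2)
       = n * ((n - 1) * ((n - k ^ 2) * (n - 1) + k * (k - 1) ^ 2) / (2 * k ^ 2 * (k - 1) ^ 2))"
proof -
  have "k ^ 2 * (k - 1) ^ 2 \<noteq> 0" using assms(1,2) by simp
  moreover have "(M * (M - 1) - n * (r * (r - 1))) * (k ^ 2 * (k - 1) ^ 2)
      = n * ((n - 1) * ((n - k ^ 2) * (n - 1) + k * (k - 1) ^ 2))"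
    using assms(3,4) by algebra
  ultimately have "M * (M - 1) - n * (r * (r - 1))
      = n * ((n - 1) * ((n - k ^ 2) * (n - 1) + k * (k - 1) ^ 2)) / (k ^ 2 * (k - 1) ^ 2)"
    by (simp add: nonzero_eq_divide_eq)
  then show ?thesis
    by (simp add: gbinomial_prod_rev numeral_2_eq_2 right_diff_distrib[symmetric] diff_divide_distrib[symmetric])
qed

lemma finite_J: "finite (J q n w)"
  by (rule finite_subset[OF _ finite_lists_length_eq[OF finite_atLeastLessThan, of 0 q n]])
     (auto simp: J_def)

lemma nth_J_less:
  assumes "x \<in> J q n w" "i < n"
  shows "x ! i < q"
proof -
  have "x ! i \<in> set x" using assms by (simp add: J_def)
  then show ?thesis using assms(1) by (auto simp: J_def)
qed

lemma card_zero_positions: "card {i. i < length x \<and> x ! i = 0} = length x - wt x"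
proof -
  have "{i. i < length x \<and> x ! i = 0} = {..<length x} - {i. i < length x \<and> x ! i \<noteq> 0}"
    by auto
  then show ?thesis
    by (simp add: wt_def card_Diff_subset subset_eq)
qed

lemma card_agreements_le_one:
  assumes "length x = n" "n - 1 \<le> hdist x y"
  shows "card {i. i < n \<and> x ! i = y ! i} \<le> 1"
proof -
  have "{i. i < n \<and> x ! i = y ! i} = {..<n} - {i. i < length x \<and> x ! i \<noteq> y ! i}"
    using assms by auto
  then show ?thesis
    using assms by (simp add: hdist_def card_Diff_subset subset_eq)
qed

lemma is_code_finite: "is_code q n w d M C \<Longrightarrow> finite C"
  unfolding is_code_def using finite_subset[OF _ finite_J] by blast

lemma is_code_word:
  assumes "is_code q n w d M C" "x \<in> C"
  shows "x \<in> J q n w" "length x = n" "wt x = w"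
  using assms by (auto simp: is_code_def J_def)

definition symbol_count :: "nat list set \<Rightarrow> nat \<Rightarrow> nat \<Rightarrow> nat" where
  "symbol_count C i s = card {x \<in> C. x ! i = s}"

lemma sum_symbol_count:
  assumes "C \<subseteq> J q n w" "i < n"
  shows "(\<Sum>s<q. symbol_count C i s) = card C"
proof -
  have "finite C" using assms(1) finite_J finite_subset by blast
  moreover have "(\<lambda>x. x ! i) ` C \<subseteq> {..<q}" using assms nth_J_less by blast
  ultimately show ?thesis
    using sum.group[of C "{..<q}" "\<lambda>x. x ! i" "\<lambda>_. 1::nat"] by (simp add: symbol_count_def)
qed

lemma code_zero_count_le:
  assumes code: "is_code q n w (n - 1) M C" and i: "i < n"
  shows "symbol_count C i 0 * (n - w - 1) \<le> n - 1"
proof -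
  \<comment> \<open>Codewords with a zero at i already agree there, so their other zero sets are disjoint.\<close>
  define C0 where "C0 = {x \<in> C. x ! i = 0}"
  define Z where "Z x = {j. j < n \<and> x ! j = 0} - {i}" for x :: "nat list"
  have "finite C0" using is_code_finite[OF code] by (simp add: C0_def)
  have card_Z: "card (Z x) = n - w - 1" if "x \<in> C0" for x
  proof -
    have "card {j. j < n \<and> x ! j = 0} = n - w"
      using that card_zero_positions[of x] is_code_word[OF code] by (simp add: C0_def)
    then show ?thesis
      using that i by (simp add: Z_def C0_def card_Diff_singleton)
  qed
  have "Z x \<inter> Z y = {}" if "x \<in> C0" "y \<in> C0" "x \<noteq> y" for x y
  proof (rule ccontr)
    assume "Z x \<inter> Z y \<noteq> {}"
    then obtain j where "j \<in> Z x" "j \<in> Z y" by blast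
    then have "{i, j} \<subseteq> {l. l < n \<and> x ! l = y ! l}" "i \<noteq> j"
      using that i by (auto simp: Z_def C0_def)
    then have "2 \<le> card {l. l < n \<and> x ! l = y ! l}"
      using card_mono[of "{l. l < n \<and> x ! l = y ! l}" "{i, j}"] by simp
    moreover have "card {l. l < n \<and> x ! l = y ! l} \<le> 1"
      using that code card_agreements_le_one is_code_word[OF code] by (simp add: is_code_def C0_def)
    ultimately show False by simp
  qed
  then have "card (\<Union> (Z ` C0)) = (\<Sum>x\<in>C0. card (Z x))"
    using \<open>finite C0\<close> by (intro card_UN_disjoint) (auto simp: Z_def)
  also have "\<dots> = symbol_count C i 0 * (n - w - 1)"
    using card_Z by (simp add: symbol_count_def C0_def)
  finally have "symbol_count C i 0 * (n - w - 1) = card (\<Union> (Z ` C0))" ..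
  also have "\<dots> \<le> card ({..<n} - {i})"
    by (intro card_mono) (auto simp: Z_def)
  finally show ?thesis using i by simp
qed

lemma code_sum_zero_counts:
  assumes code: "is_code q n w d M C"
  shows "(\<Sum>i<n. symbol_count C i 0) = M * (n - w)"
proof -
  have "(\<Sum>i<n. symbol_count C i 0) = (\<Sum>x\<in>C. card {i\<in>{..<n}. x ! i = 0})"
    using sum_card_filter_swap[of "{..<n}" C "\<lambda>i x. x ! i = 0"] is_code_finite[OF code]
    by (simp add: symbol_count_def)
  also have "\<dots> = (\<Sum>x\<in>C. n - w)"
  proof (rule sum.cong[OF refl])
    fix x assume "x \<in> C"
    then show "card {i\<in>{..<n}. x ! i = 0} = n - w"
      using card_zero_positions[of x] is_code_word[OF code] by simp
  qed
  finally show ?thesis using code by (simp add: is_code_def)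
qed

lemma code_zero_count_eq:
  assumes code: "is_code q n w (n - 1) M C"
    and M: "M * ((n - w) * (n - w - 1)) = n * (n - 1)" and i: "i < n"
  shows "symbol_count C i 0 * (n - w - 1) = n - 1"
proof (rule sum_mono_inv[where f = "\<lambda>j. symbol_count C j 0 * (n - w - 1)" and g = "\<lambda>_. n - 1"])
  show "(\<Sum>j<n. symbol_count C j 0 * (n - w - 1)) = (\<Sum>j<n. n - 1)"
    using M by (simp add: sum_distrib_right[symmetric] code_sum_zero_counts[OF code] mult.assoc)
qed (use code_zero_count_le[OF code] i in auto)

lemma code_agreeing_pairs:
  assumes code: "is_code q n w (n - 1) M C"
  shows "(\<Sum>i<n. \<Sum>s<q. symbol_count C i s choose 2) \<le> M choose 2"
proof -
  have fin: "finite C" using is_code_finite[OF code] .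
  have fibres: "2 * (\<Sum>s<q. symbol_count C i s choose 2) = (\<Sum>x\<in>C. card {y\<in>C. y \<noteq> x \<and> y ! i = x ! i})"
    if "i < n" for i
  proof -
    have "(\<lambda>x. x ! i) ` C \<subseteq> {..<q}"
      using that nth_J_less is_code_word(1)[OF code] by blast
    then show ?thesis
      using sum_fibre_pairs[OF fin finite_lessThan, of "\<lambda>x. x ! i"]
      by (simp add: sum_distrib_left two_mult_choose_two symbol_count_def)
  qed
  have agreements: "(\<Sum>y\<in>C. card {i\<in>{..<n}. y \<noteq> x \<and> y ! i = x ! i}) \<le> M - 1" if "x \<in> C" for x
  proof -
    have "(\<Sum>y\<in>C. card {i\<in>{..<n}. y \<noteq> x \<and> y ! i = x ! i})
        = (\<Sum>y\<in>C - {x}. card {i. i < n \<and> y ! i = x ! i})"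
      using fin that by (simp add: sum.remove)
    also have "\<dots> \<le> of_nat (card (C - {x})) * 1"
      using that code card_agreements_le_one is_code_word[OF code]
      by (intro sum_bounded_above) (auto simp: is_code_def)
    finally show ?thesis using fin that code by (simp add: is_code_def)
  qed
  have "2 * (\<Sum>i<n. \<Sum>s<q. symbol_count C i s choose 2)
      = (\<Sum>i<n. \<Sum>x\<in>C. card {y\<in>C. y \<noteq> x \<and> y ! i = x ! i})"
    using fibres by (simp add: sum_distrib_left)
  also have "\<dots> = (\<Sum>x\<in>C. \<Sum>i<n. card {y\<in>C. y \<noteq> x \<and> y ! i = x ! i})"
    by (rule sum.swap)
  also have "\<dots> = (\<Sum>x\<in>C. \<Sum>y\<in>C. card {i\<in>{..<n}. y \<noteq> x \<and> y ! i = x ! i})"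
    using fin by (intro sum.cong refl sum_card_filter_swap) auto
  also have "\<dots> \<le> (\<Sum>x\<in>C. M - 1)"
    using agreements by (rule sum_mono)
  also have "\<dots> = 2 * (M choose 2)"
    using code by (simp add: is_code_def two_mult_choose_two)
  finally show ?thesis by simp
qed

lemma code_zero_count_eq_real:
  fixes q n k M :: nat and C :: "nat list set"
  assumes k: "2 \<le> k" "k < n"
    and M: "real M * (real k * (real k - 1)) = real n * (real n - 1)"
    and code: "is_code q n (n - k) (n - 1) M C" and i: "i < n"
  shows "real (symbol_count C i 0) = (real n - 1) / (real k - 1)"
proof -
  have "real (M * (k * (k - 1))) = real (n * (n - 1))"
    using M k by (simp add: of_nat_diff)
  then have "M * (k * (k - 1)) = n * (n - 1)"
    by (simp only: of_nat_eq_iff)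
  then have "real (symbol_count C i 0 * (k - 1)) = real (n - 1)"
    using code_zero_count_eq[OF code _ i] k by simp
  then show ?thesis
    using k by (simp add: of_nat_diff field_simps)
qed

lemma code_exists_sparse_coordinate:
  fixes q n k M :: nat and C :: "nat list set"
  assumes k: "2 \<le> k" "k < n"
    and M: "real M = real n * (real n - 1) / (real k * (real k - 1))"
    and code: "is_code q n (n - k) (n - 1) M C"
  defines "R \<equiv> (real n - 1) * (real n - real k) / (real k * (real k - 1))"
    and "Pt \<equiv> (real n - 1) * ((real n - real k ^ 2) * (real n - 1) + real k * (real k - 1) ^ 2)
               / (2 * real k ^ 2 * (real k - 1) ^ 2)"
  shows "\<exists>i<n. (\<Sum>s\<in>{1..<q}. real (symbol_count C i s)) = R
           \<and> real (\<Sum>s\<in>{1..<q}. symbol_count C i s choose 2) \<le> Pt"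
proof -
  define r where "r = (real n - 1) / (real k - 1)"
  define T where "T i = (\<Sum>s\<in>{1..<q}. symbol_count C i s choose 2)" for i
  have M_real: "real M * (real k * (real k - 1)) = real n * (real n - 1)"
    using M k by (simp add: field_simps)
  have r_real: "r * (real k - 1) = real n - 1"
    using k by (simp add: r_def)
  have zeros: "real (symbol_count C i 0) = r" if "i < n" for i
    unfolding r_def using code_zero_count_eq_real[OF k M_real code that] .
  have card_C: "(\<Sum>s<q. symbol_count C i s) = M" if "i < n" for i
    using code sum_symbol_count[OF _ that, of C q "n - k"] by (simp add: is_code_def)
  have "q \<noteq> 0"
  proof
    assume "q = 0"
    then have "real M = 0" using card_C[of 0] k by simp
    with M_real k show False by simp
  qed
  then have symbols: "{..<q} = insert 0 {1..<q}" by auto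
  have "real (\<Sum>i<n. \<Sum>s<q. symbol_count C i s choose 2) \<le> real (M choose 2)"
    using code_agreeing_pairs[OF code] by (simp only: of_nat_le_iff)
  then have "(\<Sum>i<n. (r gchoose 2) + real (T i)) \<le> real M gchoose 2"
    using zeros by (simp add: symbols T_def binomial_gbinomial)
  then have "(\<Sum>i<n. real (T i)) \<le> (real M gchoose 2) - real n * (r gchoose 2)"
    by (simp add: sum.distrib)
  also have "\<dots> = real n * Pt"
    unfolding Pt_def using k M_real r_real by (intro gchoose_two_excess_eq) auto
  finally obtain i where i: "i < n" and "real (T i) \<le> Pt"
    using ex_le_average[of "{..<n}" "\<lambda>i. real (T i)" Pt] k by auto
  moreover have "(\<Sum>s\<in>{1..<q}. real (symbol_count C i s)) = real M - r"
    using card_C[OF i] zeros[OF i] by (simp add: symbols flip: of_nat_sum)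
  moreover have "(real M - r) * (real k * (real k - 1)) = (real n - 1) * (real n - real k)"
    using M_real r_real by algebra
  then have "real M - r = R"
    unfolding R_def using k by (simp add: eq_divide_eq)
  ultimately show ?thesis unfolding T_def by auto
qed

theorem mainTheorem17:
  fixes q n k w M :: nat and C :: "nat list set"
  assumes "2 \<le> k" and "k < n" and "w = n - k"
    and "real M = real n * (real n - 1) / (real k * (real k - 1))"
    and "is_code q n w (n - 1) M C"
  defines "R \<equiv> (real n - 1) * (real n - real k) / (real k * (real k - 1))"
    and "Pt \<equiv> (real n - 1) * ((real n - real k ^ 2) * (real n - 1) + real k * (real k - 1) ^ 2)
               / (2 * real k ^ 2 * (real k - 1) ^ 2)"
  defines "a \<equiv> \<lfloor>R / (real q - 1)\<rfloor>"
  defines "b \<equiv> R - real_of_int a * (real q - 1)"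
  shows "(real q - 1) * (real_of_int a gchoose 2) + b * real_of_int a \<le> real_of_int \<lfloor>Pt\<rfloor>
         \<and> real q - 1 \<ge> R - real_of_int \<lfloor>Pt\<rfloor>"
proof -
  obtain i where sum_m: "(\<Sum>s\<in>{1..<q}. real (symbol_count C i s)) = R"
    and pairs: "real (\<Sum>s\<in>{1..<q}. symbol_count C i s choose 2) \<le> Pt"
    using code_exists_sparse_coordinate[OF assms(1,2,4) assms(5)[unfolded assms(3)]]
    unfolding R_def Pt_def by blast
  define m where "m s = int (symbol_count C i s)" for s
  have "real (\<Sum>s\<in>{1..<q}. symbol_count C i s choose 2) \<le> real_of_int \<lfloor>Pt\<rfloor>"
    using pairs by (metis floor_mono floor_of_nat of_int_le_iff of_int_of_nat_eq)
  then have bound: "(\<Sum>s\<in>{1..<q}. of_int (m s) gchoose 2) \<le> real_of_int \<lfloor>Pt\<rfloor>"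
    by (simp add: m_def binomial_gbinomial)
  have "R > 0"
    unfolding R_def using assms(1,2) by (intro divide_pos_pos mult_pos_pos) auto
  then have "q \<noteq> 0"
    using sum_m by (cases q) auto
  then have card: "real (card {1..<q}) = real q - 1" by (simp add: of_nat_diff)
  have sum_m': "(\<Sum>s\<in>{1..<q}. real_of_int (m s)) = R"
    using sum_m by (simp add: m_def)
  have "(1::real) gchoose 2 = 0"
    by (simp add: gbinomial_prod_rev numeral_2_eq_2)
  then show ?thesis
    using sum_gchoose_two_ge[of "{1..<q}" a m] sum_gchoose_two_ge[of "{1..<q}" 1 m] bound
    unfolding card sum_m' b_def by (simp add: algebra_simps)
qed

end
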